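(* Let $M\ge4$ be even and $1<\alpha\le2$. Then every eigenvalue $\lambda_{\tau(T_1)}$ of the $\tau$-matrix approximation $\tau(T_1)=T_1-\mathrm{HC}(T_1)$ satisfies $$\frac{2\Delta t\,\theta}{(\mathrm{b}-\mathrm{a})^{\alpha}}<\lambda_{\tau(T_1)}<\frac{2\Delta t}{h^{\alpha}}\left[\frac{\Gamma(\alpha+1)}{\Gamma(\alpha/2+1)^2}-\frac{\theta h^{\alpha}}{(\mathrm{b}-\mathrm{a})^{\alpha}}\right]-\frac{c_2\Delta t}{h^{\alpha}}.$$
   Context: Let $\mathrm{a}<\mathrm{b}$, $h=(\mathrm{b}-\mathrm{a})/(M+1)$, $\Delta t>0$, $\mu=\Delta t/h^{\alpha}$. For $k\in\mathbb{Z}$ let $c_k=\frac{(-1)^k\Gamma(\alpha+1)}{\Gamma(\alpha/2-k+1)\Gamma(\alpha/2+k+1)}$. Let $T_1=\mu T_0\in\mathbb{R}^{M\times M}$ where $T_0$ is the symmetric Toeplitz matrix with entries $[T_0]_{i,j}=c_{i-j}$. The Hankel correction $\mathrm{HC}(T_1)=\mu H$ where $H\in\mathbb{R}^{M\times M}$ is the Hankel matrix with first row $[c_2,c_3,\dots,c_{M-1},0,0]$ and last row $[0,0,c_{M-1},\dots,c_3,c_2]$; i.e. $H_{i,j}=c_{i+j}$ if $i+j\le M-1$, $H_{i,j}=0$ if $i+j\in\{M,M+1,M+2\}$, and $H_{i,j}=c_{2M+2-i-j}$ if $i+j\ge M+3$. The constant $\theta$ is $$\theta=\frac{\left(1-\frac{1+\alpha}{5+\alpha/2}\right)^{5+\frac{\alpha}{2}}e^{1+\alpha}\Gamma(\alpha+1)\sin\left(\frac{\pi\alpha}{2}\right)}{\pi\alpha}.$$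 *)

theory Defs
  imports "HOL-Analysis.Gamma_Function" "Jordan_Normal_Form.Char_Poly"
begin

definition frac_coeff :: "real \<Rightarrow> int \<Rightarrow> real" where
  "frac_coeff \<alpha> k = (-1) powi k * Gamma (\<alpha> + 1) /
      (Gamma (\<alpha>/2 - of_int k + 1) * Gamma (\<alpha>/2 + of_int k + 1))"

definition T0_mat :: "nat \<Rightarrow> real \<Rightarrow> real mat" where
  "T0_mat M \<alpha> = mat M M (\<lambda>(i,j). frac_coeff \<alpha> (int i - int j))"

text \<open>Hankel matrix H; with 1-based indices s = (i+1)+(j+1).\<close>
definition H_mat :: "nat \<Rightarrow> real \<Rightarrow> real mat" where
  "H_mat M \<alpha> = mat M M (\<lambda>(i,j). let s = int i + int j + 2 in
      if s \<le> int M - 1 then frac_coeff \<alpha> s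
      else if s \<le> int M + 2 then 0
      else frac_coeff \<alpha> (2 * int M + 2 - s))"

definition grid_h :: "real \<Rightarrow> real \<Rightarrow> nat \<Rightarrow> real" where
  "grid_h a b M = (b - a) / (real M + 1)"

definition mu_par :: "real \<Rightarrow> real \<Rightarrow> nat \<Rightarrow> real \<Rightarrow> real \<Rightarrow> real" where
  "mu_par a b M dt \<alpha> = dt / (grid_h a b M powr \<alpha>)"

definition T1_mat :: "real \<Rightarrow> real \<Rightarrow> nat \<Rightarrow> real \<Rightarrow> real \<Rightarrow> real mat" where
  "T1_mat a b M dt \<alpha> = mu_par a b M dt \<alpha> \<cdot>\<^sub>m T0_mat M \<alpha>"

definition HC_mat :: "real \<Rightarrow> real \<Rightarrow> nat \<Rightarrow> real \<Rightarrow> real \<Rightarrow> real mat" where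
  "HC_mat a b M dt \<alpha> = mu_par a b M dt \<alpha> \<cdot>\<^sub>m H_mat M \<alpha>"

definition tau_mat :: "real \<Rightarrow> real \<Rightarrow> nat \<Rightarrow> real \<Rightarrow> real \<Rightarrow> real mat" where
  "tau_mat a b M dt \<alpha> = T1_mat a b M dt \<alpha> - HC_mat a b M dt \<alpha>"

definition theta_const :: "real \<Rightarrow> real" where
  "theta_const \<alpha> = (1 - (1 + \<alpha>) / (5 + \<alpha>/2)) powr (5 + \<alpha>/2) * exp (1 + \<alpha>)
      * Gamma (\<alpha> + 1) * sin (pi * \<alpha> / 2) / (pi * \<alpha>)"

end

(*
  The tau-matrix tau(T1) = mu (T0 - H) is diagonalised by the discrete sine transform: extending a
  sine vector oddly about 0 and M + 1 turns the Hankel correction into the part of a full Toeplitz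
  convolution that the reflections fold back, so sin(i x_j), x_j = j pi / (M + 1), is an eigenvector
  with eigenvalue mu f(x_j), where f(x) = c_0 + 2 sum_{k<M} c_k cos(k x) is the symbol of T0.
  These M vectors are orthogonal, hence every eigenvalue is of this form.

  For 1 < alpha < 2 the reflection formula gives c_k <= 0 for k >= 1 and the telescoping identity
  c_0 + 2 sum_{k=1..n} c_k = 2 A Gamma(n + 1 - alpha/2) / Gamma(n + 1 + alpha/2), with
  A = Gamma(alpha) sin(pi alpha / 2) / pi.  So f lies between this partial sum and 2 c_0 minus it.
  Log-convexity of Gamma bounds the Gamma ratio below by (n + 2)^(-alpha), and theta <= A because
  theta / A = u^p e^(p (1 - u)) <= 1 for u = 1 - (1 + alpha)/p, p = 5 + alpha/2.
  For alpha = 2 the symbol is the classical 2 - 2 cos x.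
*)
theory Submission
  imports Defs "HOL-Analysis.Analysis"
begin

section \<open>Sine-transform diagonalisation of tau-matrices\<close>

definition toeplitz_symbol :: "(int \<Rightarrow> real) \<Rightarrow> nat \<Rightarrow> real \<Rightarrow> real" where
  "toeplitz_symbol c n x = c 0 + 2 * (\<Sum>k=1..n. c (int k) * cos (real k * x))"

lemma sum_int_symmetric:
  fixes g :: "int \<Rightarrow> 'a::comm_monoid_add"
  shows "(\<Sum>k=-int n..int n. g k) = g 0 + (\<Sum>k=1..n. g (int k) + g (- int k))"
proof (induction n)
  case (Suc n)
  have "{-int (Suc n)..int (Suc n)} = insert (int n + 1) (insert (-(int n + 1)) {-int n..int n})"
    by auto
  then show ?case using Suc by (simp add: add_ac)
qed simp

lemma sum_even_coeff_mult_sin_diff: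
  fixes c :: "int \<Rightarrow> real" and I :: int and x :: real
  assumes even: "\<And>k. c (-k) = c k"
  shows "(\<Sum>k=-int n..int n. c k * sin ((I - k) * x)) = sin (I * x) * toeplitz_symbol c n x"
proof -
  have "c (int k) * sin ((I - int k) * x) + c (- int k) * sin ((I + int k) * x)
      = 2 * sin (I * x) * (c (int k) * cos (k * x))" for k :: nat
    using even[of "int k"] by (simp add: algebra_simps sin_diff sin_add)
  then show ?thesis
    by (simp add: sum_int_symmetric toeplitz_symbol_def sum_distrib_left algebra_simps)
qed

lemma split_int_interval_sum:
  fixes g :: "int \<Rightarrow> 'a::comm_monoid_add"
  assumes "a \<le> 1" "0 \<le> M" "M \<le> b"
  shows "(\<Sum>L=a..b. g L) = (\<Sum>L=a..0. g L) + (\<Sum>L=1..M. g L) + (\<Sum>L=M+1..b. g L)"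
proof -
  have "{a..b} = {a..0} \<union> ({1..M} \<union> {M+1..b})"
    using assms by auto
  moreover have "sum g ({1..M} \<union> {M+1..b}) = sum g {1..M} + sum g {M+1..b}"
    by (rule sum.union_disjoint) auto
  moreover have "sum g ({a..0} \<union> ({1..M} \<union> {M+1..b})) = sum g {a..0} + sum g ({1..M} \<union> {M+1..b})"
    by (rule sum.union_disjoint) (use assms in auto)
  ultimately show ?thesis
    by (simp add: add.assoc)
qed

lemma sum_reflect_at_zero:
  fixes c :: "int \<Rightarrow> real" and M I :: int and x :: real
  assumes "1 \<le> I" "I \<le> M"
  shows "(\<Sum>L=I-M+1..0. c (I - L) * sin (L * x))
       = - (\<Sum>m=1..M. (if I + m \<le> M - 1 then c (I + m) else 0) * sin (m * x))"
proof -
  have "(\<Sum>L=I-M+1..0. c (I - L) * sin (L * x)) = - (\<Sum>m=0..M-1-I. c (I + m) * sin (m * x))"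
    by (subst sum_negf[symmetric], rule sum.reindex_bij_witness[of _ uminus uminus]) auto
  also have "(\<Sum>m=0..M-1-I. c (I + m) * sin (m * x))
      = (\<Sum>m\<in>{m\<in>{0..M}. I + m \<le> M - 1}. c (I + m) * sin (m * x))"
    by (rule sum.cong) (use assms in auto)
  also have "\<dots> = (\<Sum>m=0..M. (if I + m \<le> M - 1 then c (I + m) else 0) * sin (m * x))"
    by (subst sum.inter_filter) (auto intro!: sum.cong)
  also have "{0..M} = insert 0 {1..M}"
    using assms by auto
  finally show ?thesis
    by simp
qed

lemma sum_reflect_at_end:
  fixes c :: "int \<Rightarrow> real" and M I j :: int and x :: real
  assumes even: "\<And>k. c (-k) = c k" and "1 \<le> I" "I \<le> M" and x: "x * (M + 1) = j * pi"
  shows "(\<Sum>L=M+1..I+M-1. c (I - L) * sin (L * x))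
       = - (\<Sum>m=1..M. (if I + m \<ge> M + 3 then c (2 * M + 2 - I - m) else 0) * sin (m * x))"
proof -
  have sin_reflect: "sin ((2 * M + 2 - m) * x) = - sin (m * x)" for m :: int
  proof -
    have "(2 * M + 2 - m) * x = 2 * pi * j - m * x"
      using x by (simp add: algebra_simps)
    then show ?thesis
      by (simp add: sin_diff)
  qed
  have "(\<Sum>L=M+1..I+M-1. c (I - L) * sin (L * x))
      = - (\<Sum>m=M+3-I..M+1. c (2 * M + 2 - I - m) * sin (m * x))"
  proof (subst sum_negf[symmetric], rule sum.reindex_bij_witness[of _ "\<lambda>L. 2 * M + 2 - L" "\<lambda>L. 2 * M + 2 - L"])
    fix L
    have "c (2 * M + 2 - I - (2 * M + 2 - L)) = c (I - L)"
      using even[of "I - L"] by (simp add: algebra_simps)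
    then show "- (c (2 * M + 2 - I - (2 * M + 2 - L)) * sin (of_int (2 * M + 2 - L) * x))
        = c (I - L) * sin (of_int L * x)"
      using sin_reflect[of L] by simp
  qed auto
  also have "(\<Sum>m=M+3-I..M+1. c (2 * M + 2 - I - m) * sin (m * x))
      = (\<Sum>m\<in>{m\<in>{1..M+1}. I + m \<ge> M + 3}. c (2 * M + 2 - I - m) * sin (m * x))"
    by (rule sum.cong) (use assms in auto)
  also have "\<dots> = (\<Sum>m=1..M+1. (if I + m \<ge> M + 3 then c (2 * M + 2 - I - m) else 0) * sin (m * x))"
    by (subst sum.inter_filter) (auto intro!: sum.cong)
  also have "{1..M+1} = insert (M+1) {1..M}"
    using assms by auto
  moreover have "sin ((M + 1) * x) = 0"
    using x sin_npi_int[of j] by (simp add: mult.commute)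
  ultimately show ?thesis
    by simp
qed

definition tau_hankel :: "(int \<Rightarrow> real) \<Rightarrow> int \<Rightarrow> int \<Rightarrow> real" where
  "tau_hankel c M s = (if s \<le> M - 1 then c s else if s \<le> M + 2 then 0 else c (2 * M + 2 - s))"

lemma tau_row_mult_sin:
  fixes c :: "int \<Rightarrow> real" and M I j :: int and x :: real
  assumes even: "\<And>k. c (-k) = c k" and I: "1 \<le> I" "I \<le> M" and x: "x * (M + 1) = j * pi"
  shows "(\<Sum>m=1..M. (c (I - m) - tau_hankel c M (I + m)) * sin (m * x))
       = sin (I * x) * toeplitz_symbol c (nat (M - 1)) x"
proof -
  have "sin (I * x) * toeplitz_symbol c (nat (M - 1)) x
      = (\<Sum>k=-(M-1)..M-1. c k * sin ((I - k) * x))"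
    using sum_even_coeff_mult_sin_diff[where c=c and n="nat (M - 1)" and I=I and x=x, OF even] I by simp
  also have "\<dots> = (\<Sum>L=I-M+1..I+M-1. c (I - L) * sin (L * x))"
    by (rule sum.reindex_bij_witness[of _ "\<lambda>L. I - L" "\<lambda>L. I - L"]) auto
  also have "\<dots> = (\<Sum>L=I-M+1..0. c (I - L) * sin (L * x)) + (\<Sum>m=1..M. c (I - m) * sin (m * x))
       + (\<Sum>L=M+1..I+M-1. c (I - L) * sin (L * x))"
    by (rule split_int_interval_sum) (use I in auto)
  also have "\<dots> = (\<Sum>m=1..M. (c (I - m) - tau_hankel c M (I + m)) * sin (m * x))"
    unfolding sum_reflect_at_zero[OF I] sum_reflect_at_end[where c=c, OF even I x]
    by (auto simp: tau_hankel_def sum.distrib[symmetric] sum_subtractf[symmetric] algebra_simps intro!: sum.cong)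
  finally show ?thesis ..
qed

lemma sin_half_mult_sum_cos:
  fixes y :: real
  shows "2 * sin (y/2) * (\<Sum>j=1..n. cos (real j * y)) = sin ((real n + 1/2) * y) - sin (y/2)"
proof (induction n)
  case (Suc n)
  have "2 * sin (y/2) * cos ((real n + 1) * y)
      = sin ((real n + 1) * y + y/2) - sin ((real n + 1) * y - y/2)"
    by (simp add: sin_add sin_diff)
  moreover have "(real n + 1) * y + y/2 = (real (Suc n) + 1/2) * y"
    and "(real n + 1) * y - y/2 = (real n + 1/2) * y"
    by (simp_all add: algebra_simps)
  ultimately show ?case
    using Suc by (simp add: algebra_simps)
qed simp

lemma sum_cos_mult_pi_div:
  fixes M m :: nat
  assumes "0 < m" "m < 2 * (M + 1)"
  shows "(\<Sum>j=1..M. cos (real j * (real m * pi / (real M + 1)))) = - (1 + (-1)^m) / 2"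
proof -
  define y where "y = real m * pi / (real M + 1)"
  have "real m < 2 * (real M + 1)"
    using assms(2) by (simp flip: of_nat_less_iff)
  then have "real m * pi < 2 * (real M + 1) * pi"
    by simp
  then have "0 < y/2" "y/2 < pi"
    using assms(1) by (simp_all add: y_def field_simps)
  then have pos: "sin (y/2) > 0"
    by (rule sin_gt_zero)
  have "(real M + 1/2) * y = real m * pi - y/2"
    unfolding y_def by (simp add: field_simps)
  then have "sin ((real M + 1/2) * y) = - ((-1)^m * sin (y/2))"
    by (simp add: sin_diff)
  then have "2 * sin (y/2) * (\<Sum>j=1..M. cos (real j * y)) = 2 * sin (y/2) * (- (1 + (-1)^m) / 2)"
    using sin_half_mult_sum_cos[of y M] by (simp add: algebra_simps)
  then show ?thesis
    using pos unfolding y_def by simp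
qed

lemma sum_sin_mult_sin_orthogonal:
  fixes M p q :: nat
  assumes "p \<in> {1..M}" "q \<in> {1..M}"
  shows "(\<Sum>j=1..M. sin (real p * (real j * pi / (real M + 1))) * sin (real q * (real j * pi / (real M + 1))))
       = (if p = q then (real M + 1) / 2 else 0)"
proof -
  define S where "S m = (\<Sum>j=1..M. cos (real j * (real m * pi / (real M + 1))))" for m
  have prod: "(\<Sum>j=1..M. sin (real p * (real j * pi / (real M + 1))) * sin (real q * (real j * pi / (real M + 1))))
      = (S (p - q) - S (p + q)) / 2" if "q \<le> p" for p q
  proof -
    have pointwise: "sin (real p * (real j * pi / (real M + 1))) * sin (real q * (real j * pi / (real M + 1)))
        = (cos (real j * (real (p - q) * pi / (real M + 1)))
           - cos (real j * (real (p + q) * pi / (real M + 1)))) / 2" for j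
      using that by (simp add: cos_diff cos_add of_nat_diff algebra_simps add_divide_distrib diff_divide_distrib)
    show ?thesis
      unfolding S_def by (simp only: pointwise sum_divide_distrib[symmetric] sum_subtractf)
  qed
  have "S 0 = M" "S (p + p) = -1"
    using sum_cos_mult_pi_div[of "p + p" M] assms by (simp_all add: S_def)
  moreover have "S (p - q) = S (p + q)" if "q < p" "p \<in> {1..M}" "q \<in> {1..M}" for p q
  proof -
    have "p + q = (p - q) + 2 * q"
      using that by simp
    then have "(-1::real)^(p + q) = (-1)^(p - q) * ((-1)^2)^q"
      by (simp only: power_add power_mult)
    then have "(-1::real)^(p + q) = (-1)^(p - q)"
      by simp
    moreover have "S (p - q) = - (1 + (-1)^(p - q)) / 2" "S (p + q) = - (1 + (-1)^(p + q)) / 2"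
      unfolding S_def by (intro sum_cos_mult_pi_div; use that in auto)+
    ultimately show ?thesis
      by simp
  qed
  ultimately show ?thesis
    using prod[of q p] prod[of p q] assms by (cases p q rule: linorder_cases) (simp_all add: mult.commute)
qed

lemma eigenvalue_mem_orthogonal_eigenvectors:
  fixes A :: "'a::field mat" and s :: "'b \<Rightarrow> 'a vec"
  assumes A: "A \<in> carrier_mat n n" "transpose_mat A = A"
    and s: "\<And>j. j \<in> J \<Longrightarrow> s j \<in> carrier_vec n"
    and eig: "\<And>j. j \<in> J \<Longrightarrow> A *\<^sub>v s j = f j \<cdot>\<^sub>v s j"
    and orth: "\<And>i l. i < n \<Longrightarrow> l < n \<Longrightarrow> (\<Sum>j\<in>J. s j $ i * s j $ l) = (if i = l then \<kappa> else 0)"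
    and "\<kappa> \<noteq> 0"
    and "eigenvalue A lam"
  shows "\<exists>j\<in>J. lam = f j"
proof (rule ccontr)
  assume "\<not> (\<exists>j\<in>J. lam = f j)"
  obtain v where v: "v \<in> carrier_vec n" "v \<noteq> 0\<^sub>v n" "A *\<^sub>v v = lam \<cdot>\<^sub>v v"
    using \<open>eigenvalue A lam\<close> A unfolding eigenvalue_def eigenvector_def by auto
  have coeff_zero: "s j \<bullet> v = 0" if j: "j \<in> J" for j
  proof -
    have "f j * (s j \<bullet> v) = (A *\<^sub>v s j) \<bullet> v"
      using eig[OF j] s[OF j] v by simp
    also have "\<dots> = s j \<bullet> (A *\<^sub>v v)"
      using transpose_vec_mult_scalar[OF A(1) v(1) s[OF j]] A(2) by simp
    also have "\<dots> = lam * (s j \<bullet> v)"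
      using s[OF j] v by simp
    finally have "(f j - lam) * (s j \<bullet> v) = 0"
      by (simp add: algebra_simps)
    then show ?thesis
      using \<open>\<not> (\<exists>j\<in>J. lam = f j)\<close> j by auto
  qed
  have "v = 0\<^sub>v n"
  proof (rule eq_vecI)
    fix i assume "i < dim_vec (0\<^sub>v n)"
    then have i: "i < n" by simp
    have "0 = (\<Sum>j\<in>J. s j $ i * (s j \<bullet> v))"
      by (simp add: coeff_zero)
    also have "\<dots> = (\<Sum>l<n. v $ l * (\<Sum>j\<in>J. s j $ i * s j $ l))"
      using s v(1) by (simp add: scalar_prod_def sum_distrib_left lessThan_atLeast0 mult_ac
          sum.swap[of _ J] cong: sum.cong)
    also have "\<dots> = (\<Sum>l<n. if l = i then v $ l * \<kappa> else 0)"
      using i by (intro sum.cong) (auto simp: orth)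
    also have "\<dots> = v $ i * \<kappa>"
      using i by simp
    finally show "v $ i = 0\<^sub>v n $ i"
      using \<open>\<kappa> \<noteq> 0\<close> i by simp
  qed (use v in simp)
  with v show False
    by simp
qed

lemma eigenvalue_smult_mat:
  fixes A :: "'a::field mat"
  assumes A: "A \<in> carrier_mat n n" and "\<mu> \<noteq> 0" and "eigenvalue (\<mu> \<cdot>\<^sub>m A) lam"
  shows "eigenvalue A (lam / \<mu>)"
proof -
  obtain v where v: "v \<in> carrier_vec n" "v \<noteq> 0\<^sub>v n" "(\<mu> \<cdot>\<^sub>m A) *\<^sub>v v = lam \<cdot>\<^sub>v v"
    using assms unfolding eigenvalue_def eigenvector_def by auto
  have "A *\<^sub>v v = (lam / \<mu>) \<cdot>\<^sub>v v"
  proof (rule eq_vecI)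
    fix i assume "i < dim_vec ((lam / \<mu>) \<cdot>\<^sub>v v)"
    then have i: "i < n"
      using v(1) by simp
    have "\<mu> * (row A i \<bullet> v) = lam * v $ i"
      using arg_cong[OF v(3), of "\<lambda>w. w $ i"] A v(1) i by (simp add: row_smult)
    then show "(A *\<^sub>v v) $ i = ((lam / \<mu>) \<cdot>\<^sub>v v) $ i"
      using A v(1) i \<open>\<mu> \<noteq> 0\<close> by (simp add: field_simps)
  qed (use A v in simp)
  then show ?thesis
    using v A unfolding eigenvalue_def eigenvector_def by auto
qed

definition tau_toeplitz :: "(int \<Rightarrow> real) \<Rightarrow> nat \<Rightarrow> real mat" where
  "tau_toeplitz c M = mat M M (\<lambda>(i, l). c (int i - int l) - tau_hankel c (int M) (int i + int l + 2))"

definition sine_vec :: "nat \<Rightarrow> nat \<Rightarrow> real vec" where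
  "sine_vec M j = vec M (\<lambda>i. sin (real (Suc i) * (real j * pi / (real M + 1))))"

lemma tau_toeplitz_carrier: "tau_toeplitz c M \<in> carrier_mat M M"
  by (simp add: tau_toeplitz_def)

lemma transpose_tau_toeplitz:
  assumes "\<And>k. c (-k) = c k"
  shows "transpose_mat (tau_toeplitz c M) = tau_toeplitz c M"
proof -
  have "c (int l - int i) = c (int i - int l)" for i l
    using assms[of "int i - int l"] by simp
  then show ?thesis
    by (auto simp: tau_toeplitz_def add_ac)
qed

lemma tau_toeplitz_mult_sine_vec:
  assumes even: "\<And>k. c (-k) = c k" and j: "j \<in> {1..M}"
  shows "tau_toeplitz c M *\<^sub>v sine_vec M j
       = toeplitz_symbol c (M - 1) (real j * pi / (real M + 1)) \<cdot>\<^sub>v sine_vec M j"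
proof (rule eq_vecI)
  fix i assume "i < dim_vec (toeplitz_symbol c (M - 1) (real j * pi / (real M + 1)) \<cdot>\<^sub>v sine_vec M j)"
  then have i: "i < M"
    by (simp add: sine_vec_def)
  define x where "x = real j * pi / (real M + 1)"
  have x: "x * (int M + 1) = int j * pi"
    unfolding x_def by (simp add: field_simps)
  have "(tau_toeplitz c M *\<^sub>v sine_vec M j) $ i
      = (\<Sum>l<M. (c (int i - int l) - tau_hankel c (int M) (int i + int l + 2)) * sin (real (Suc l) * x))"
    using i by (simp add: tau_toeplitz_def sine_vec_def scalar_prod_def lessThan_atLeast0 x_def)
  also have "\<dots> = (\<Sum>m=1..int M. (c ((int i + 1) - m) - tau_hankel c (int M) ((int i + 1) + m)) * sin (m * x))"
    by (rule sum.reindex_bij_witness[of _ "\<lambda>m. nat (m - 1)" "\<lambda>l. int l + 1"]) (auto simp: algebra_simps)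
  also have "\<dots> = sin ((int i + 1) * x) * toeplitz_symbol c (M - 1) x"
    using tau_row_mult_sin[where c=c, OF even _ _ x] i by (simp add: nat_diff_distrib)
  finally show "(tau_toeplitz c M *\<^sub>v sine_vec M j) $ i
      = (toeplitz_symbol c (M - 1) (real j * pi / (real M + 1)) \<cdot>\<^sub>v sine_vec M j) $ i"
    using i by (simp add: sine_vec_def x_def add.commute)
qed (simp add: tau_toeplitz_def sine_vec_def)

lemma eigenvalue_tau_toeplitz:
  assumes even: "\<And>k. c (-k) = c k" and "eigenvalue (tau_toeplitz c M) lam"
  shows "\<exists>j\<in>{1..M}. lam = toeplitz_symbol c (M - 1) (real j * pi / (real M + 1))"
proof (rule eigenvalue_mem_orthogonal_eigenvectors)
  show "(\<Sum>j\<in>{1..M}. sine_vec M j $ i * sine_vec M j $ l) = (if i = l then (real M + 1) / 2 else 0)"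
    if "i < M" "l < M" for i l
    using sum_sin_mult_sin_orthogonal[of "Suc i" M "Suc l"] that by (simp add: sine_vec_def)
qed (use assms in \<open>auto simp: transpose_tau_toeplitz tau_toeplitz_mult_sine_vec\<close>,
     auto simp: tau_toeplitz_def sine_vec_def)

section \<open>Coefficients of the fractional centred difference\<close>

lemma Gamma_plus1_pos_real: "(x::real) > 0 \<Longrightarrow> Gamma (x + 1) = x * Gamma x"
  by (rule Gamma_plus1) auto

lemma Gamma_reflection_real:
  fixes z :: real
  shows "Gamma z * Gamma (1 - z) = pi / sin (pi * z)"
proof -
  have "complex_of_real (Gamma z * Gamma (1 - z)) = Gamma (complex_of_real z) * Gamma (1 - complex_of_real z)"
    by (simp add: Gamma_complex_of_real[symmetric])
  also have "\<dots> = of_real pi / sin (of_real pi * of_real z)"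
    by (rule Gamma_reflection_complex)
  also have "\<dots> = complex_of_real (pi / sin (pi * z))"
    by (simp add: sin_of_real[symmetric])
  finally show ?thesis
    by (simp only: of_real_eq_iff)
qed

lemma frac_coeff_minus: "frac_coeff \<alpha> (- k) = frac_coeff \<alpha> k"
  unfolding frac_coeff_def by (simp add: power_int_minus_one_minus algebra_simps)

definition frac_weight :: "real \<Rightarrow> real" where
  "frac_weight \<alpha> = Gamma \<alpha> * sin (pi * \<alpha> / 2) / pi"

definition gamma_ratio :: "real \<Rightarrow> nat \<Rightarrow> real" where
  "gamma_ratio \<alpha> n = Gamma (real n + 1 - \<alpha>/2) / Gamma (real n + 1 + \<alpha>/2)"

lemma frac_weight_pos:
  assumes "0 < \<alpha>" "\<alpha> < 2"
  shows "frac_weight \<alpha> > 0"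
  using assms by (auto simp: frac_weight_def intro!: divide_pos_pos mult_pos_pos sin_gt_zero)

lemma frac_coeff_zero_eq:
  assumes "0 < \<alpha>" "\<alpha> < 2"
  shows "frac_coeff \<alpha> 0 = 2 * frac_weight \<alpha> * gamma_ratio \<alpha> 0"
proof -
  have pos: "sin (pi * \<alpha> / 2) > 0" "Gamma (\<alpha>/2) > 0" "Gamma (\<alpha>/2 + 1) > 0"
    using assms by (auto intro!: sin_gt_zero)
  then have inv: "1 / Gamma (\<alpha>/2) = sin (pi * \<alpha> / 2) * Gamma (1 - \<alpha>/2) / pi"
    using Gamma_reflection_real[of "\<alpha>/2"] by (simp add: field_simps)
  have alg: "a * g / (G1 * G1) = 2 * g / G1 * (1 / G0)" if "G1 = a/2 * G0" "G0 > 0" "a > 0"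
    for a g G0 G1 :: real
    unfolding that(1) using that(2,3) by (simp add: field_simps)
  have "frac_coeff \<alpha> 0 = \<alpha> * Gamma \<alpha> / (Gamma (\<alpha>/2 + 1) * Gamma (\<alpha>/2 + 1))"
    using assms Gamma_plus1_pos_real[of \<alpha>] unfolding frac_coeff_def by (simp add: power2_eq_square)
  also have "\<dots> = 2 * Gamma \<alpha> / Gamma (\<alpha>/2 + 1) * (1 / Gamma (\<alpha>/2))"
    using assms pos by (intro alg Gamma_plus1_pos_real) auto
  finally show ?thesis
    unfolding inv frac_weight_def gamma_ratio_def by (simp add: add.commute mult_ac)
qed

lemma frac_coeff_Suc_eq:
  assumes "0 < \<alpha>" "\<alpha> < 2"
  shows "frac_coeff \<alpha> (int (Suc n))
       = - (Gamma (\<alpha> + 1) * sin (pi * \<alpha> / 2) / pi) * (Gamma (real n + 1 - \<alpha>/2) / Gamma (real n + 2 + \<alpha>/2))"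
proof -
  define z where "z = \<alpha>/2 - real n"
  have "pi * z = pi * \<alpha> / 2 - real n * pi"
    by (simp add: z_def algebra_simps)
  then have sin_z: "sin (pi * z) = (-1)^n * sin (pi * \<alpha> / 2)"
    by (simp add: sin_diff)
  have "sin (pi * \<alpha> / 2) > 0" "Gamma (1 - z) > 0"
    using assms by (auto simp: z_def intro!: sin_gt_zero)
  moreover have "sin (pi * z) \<noteq> 0"
    using sin_z \<open>sin (pi * \<alpha> / 2) > 0\<close> by simp
  moreover from this have "Gamma z \<noteq> 0"
    using Gamma_reflection_real[of z] by auto
  ultimately have inv: "1 / Gamma z = sin (pi * z) * Gamma (1 - z) / pi"
    using Gamma_reflection_real[of z] by (simp add: field_simps)
  have "frac_coeff \<alpha> (int (Suc n)) = (-1)^Suc n * Gamma (\<alpha> + 1) * (1 / Gamma z) / Gamma (real n + 2 + \<alpha>/2)"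
    unfolding frac_coeff_def z_def power_int_of_nat by (simp add: algebra_simps)
  also have "\<dots> = ((-1)^Suc n * (-1)^n) * (Gamma (\<alpha> + 1) * sin (pi * \<alpha> / 2) / pi)
      * (Gamma (real n + 1 - \<alpha>/2) / Gamma (real n + 2 + \<alpha>/2))"
    unfolding inv sin_z by (simp add: z_def algebra_simps)
  finally show ?thesis
    by (simp flip: power_add)
qed

lemma gamma_ratio_diff:
  assumes "0 < \<alpha>" "\<alpha> < 2"
  shows "gamma_ratio \<alpha> n - gamma_ratio \<alpha> (Suc n)
       = \<alpha> * (Gamma (real n + 1 - \<alpha>/2) / Gamma (real n + 2 + \<alpha>/2))"
proof -
  define p q where "p = real n + 1 - \<alpha>/2" and "q = real n + 1 + \<alpha>/2"
  have "p > 0" "q > 0"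
    using assms by (simp_all add: p_def q_def)
  have ratio: "gamma_ratio \<alpha> n = Gamma p / Gamma q" "gamma_ratio \<alpha> (Suc n) = Gamma (p + 1) / Gamma (q + 1)"
    by (simp_all add: gamma_ratio_def p_def q_def algebra_simps)
  have shift: "Gamma (p + 1) = p * Gamma p" "Gamma (q + 1) = q * Gamma q"
    using \<open>p > 0\<close> \<open>q > 0\<close> by (simp_all add: Gamma_plus1_pos_real)
  have "gamma_ratio \<alpha> n - gamma_ratio \<alpha> (Suc n) = Gamma p / Gamma q - p * Gamma p / (q * Gamma q)"
    unfolding ratio shift ..
  also have "\<dots> = (q - p) * (Gamma p / Gamma (q + 1))"
  proof -
    have "Gamma q \<noteq> 0"
      using Gamma_real_pos[OF \<open>q > 0\<close>] by linarith
    then show ?thesis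
      unfolding shift using \<open>q > 0\<close> by (simp add: field_simps)
  qed
  also have "\<dots> = \<alpha> * (Gamma (real n + 1 - \<alpha>/2) / Gamma (real n + 2 + \<alpha>/2))"
    by (simp add: p_def q_def algebra_simps)
  finally show ?thesis .
qed

lemma frac_coeff_Suc_telescoping:
  assumes "0 < \<alpha>" "\<alpha> < 2"
  shows "frac_coeff \<alpha> (int (Suc n)) = - frac_weight \<alpha> * (gamma_ratio \<alpha> n - gamma_ratio \<alpha> (Suc n))"
  using assms frac_coeff_Suc_eq[OF assms, of n] Gamma_plus1_pos_real[of \<alpha>]
  by (simp add: gamma_ratio_diff frac_weight_def)

lemma frac_coeff_nonpos:
  assumes "0 < \<alpha>" "\<alpha> < 2" "1 \<le> k"
  shows "frac_coeff \<alpha> (int k) \<le> 0"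
proof -
  obtain n where "k = Suc n"
    using assms(3) not0_implies_Suc by fastforce
  moreover have "Gamma (real n + 1 - \<alpha>/2) > 0" "Gamma (real n + 2 + \<alpha>/2) > 0"
      "Gamma (\<alpha> + 1) > 0" "sin (pi * \<alpha> / 2) > 0"
    using assms by (auto intro!: sin_gt_zero)
  ultimately show ?thesis
    using frac_coeff_Suc_eq[OF assms(1,2), of n] by simp
qed

lemma frac_coeff_partial_sum:
  assumes "0 < \<alpha>" "\<alpha> < 2"
  shows "frac_coeff \<alpha> 0 + 2 * (\<Sum>k=1..n. frac_coeff \<alpha> (int k)) = 2 * frac_weight \<alpha> * gamma_ratio \<alpha> n"
proof (induction n)
  case (Suc n)
  then show ?case
    using frac_coeff_Suc_telescoping[OF assms, of n] by (simp add: algebra_simps)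
qed (simp add: frac_coeff_zero_eq[OF assms])

lemma frac_coeff_two:
  shows "frac_coeff 2 0 = 2" and "frac_coeff 2 1 = -1" and "2 \<le> k \<Longrightarrow> frac_coeff 2 k = 0"
proof -
  have "Gamma (3::real) = 2" "Gamma (2::real) = 1"
    using Gamma_fact[of 2, where 'a=real] Gamma_fact[of 1, where 'a=real] by (simp_all add: numeral_eq_Suc)
  then show "frac_coeff 2 0 = 2" "frac_coeff 2 1 = -1"
    by (simp_all add: frac_coeff_def)
  assume "2 \<le> k"
  \<comment> \<open>Gamma is 0 at its poles, consistent with 1/Gamma vanishing there.\<close>
  then have "Gamma (2/2 - of_int k + 1 :: real) = 0"
    by (intro Gamma_nonpos_Int) (simp add: nonpos_Ints_of_int[of "2 - k", simplified])
  then show "frac_coeff 2 k = 0"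
    by (simp add: frac_coeff_def)
qed

section \<open>Bounds on the symbol and the eigenvalues\<close>

lemma toeplitz_symbol_bounds:
  assumes "\<And>k. k \<in> {1..n} \<Longrightarrow> c (int k) \<le> 0"
  shows "c 0 + 2 * (\<Sum>k=1..n. c (int k)) \<le> toeplitz_symbol c n x"
    and "toeplitz_symbol c n x \<le> c 0 - 2 * (\<Sum>k=1..n. c (int k))"
proof -
  have "(\<Sum>k=1..n. c (int k)) \<le> (\<Sum>k=1..n. c (int k) * cos (real k * x))"
    by (rule sum_mono) (use mult_left_mono_neg[OF cos_le_one assms] in simp)
  then show "c 0 + 2 * (\<Sum>k=1..n. c (int k)) \<le> toeplitz_symbol c n x"
    unfolding toeplitz_symbol_def by simp
  have "(\<Sum>k=1..n. c (int k) * cos (real k * x)) \<le> (\<Sum>k=1..n. - c (int k))"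
    by (rule sum_mono) (use mult_left_mono_neg[OF cos_ge_minus_one assms] in simp)
  then show "toeplitz_symbol c n x \<le> c 0 - 2 * (\<Sum>k=1..n. c (int k))"
    unfolding toeplitz_symbol_def by (simp add: sum_negf)
qed

lemma Gamma_add_le_powr_mult:
  fixes y s :: real
  assumes "y > 0" "0 \<le> s" "s \<le> 1"
  shows "Gamma (y + s) \<le> y powr s * Gamma y"
proof -
  have "ln (Gamma ((1 - s) *\<^sub>R y + s *\<^sub>R (y + 1))) \<le> (1 - s) * ln (Gamma y) + s * ln (Gamma (y + 1))"
    using convex_onD[OF log_convex_Gamma_real, of s y "y + 1"] assms by simp
  moreover have "(1 - s) *\<^sub>R y + s *\<^sub>R (y + 1) = y + s"
    by (simp add: algebra_simps)
  moreover have "ln (Gamma (y + 1)) = ln y + ln (Gamma y)"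
    using ln_mult_pos[OF assms(1) Gamma_real_pos[OF assms(1)]] Gamma_plus1_pos_real[OF assms(1)] by simp
  ultimately have "ln (Gamma (y + s)) \<le> ln (Gamma y) + s * ln y"
    by (simp add: algebra_simps)
  then have "exp (ln (Gamma (y + s))) \<le> exp (ln (Gamma y) + s * ln y)"
    by simp
  then show ?thesis
    using assms by (simp add: exp_add powr_def mult.commute)
qed

lemma gamma_ratio_gt:
  assumes "1 \<le> \<alpha>" "\<alpha> < 2"
  shows "1 / (real n + 2) powr \<alpha> < gamma_ratio \<alpha> n"
proof -
  define y where "y = real n + 1 - \<alpha>/2"
  have y: "y > 0" "y + (\<alpha> - 1) > 0"
    using assms by (simp_all add: y_def)
  have "Gamma (real n + 1 + \<alpha>/2) = (y + (\<alpha> - 1)) * Gamma (y + (\<alpha> - 1))"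
    using Gamma_plus1_pos_real[OF y(2)] by (simp add: y_def algebra_simps)
  also have "\<dots> \<le> (y + (\<alpha> - 1)) * (y powr (\<alpha> - 1) * Gamma y)"
    using Gamma_add_le_powr_mult[of y "\<alpha> - 1"] y assms by simp
  also have "\<dots> < (real n + 2) * ((real n + 2) powr (\<alpha> - 1) * Gamma y)"
  proof (rule mult_less_le_imp_less)
    show "y powr (\<alpha> - 1) * Gamma y \<le> (real n + 2) powr (\<alpha> - 1) * Gamma y"
      using y assms by (intro mult_right_mono powr_mono2) (simp_all add: y_def)
  qed (use y assms in \<open>simp_all add: y_def\<close>)
  also have "\<dots> = (real n + 2) powr \<alpha> * Gamma y"
    by (simp add: powr_diff field_simps)
  finally have "Gamma (real n + 1 + \<alpha>/2) < (real n + 2) powr \<alpha> * Gamma y" .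
  moreover have "1 / P < A / B" if "B < P * A" "0 < B" "0 < P" for P A B :: real
    using that by (simp add: field_simps)
  ultimately show ?thesis
    using assms unfolding gamma_ratio_def y_def[symmetric] by simp
qed

lemma theta_const_le_frac_weight:
  assumes "0 < \<alpha>" "\<alpha> \<le> 2"
  shows "theta_const \<alpha> \<le> frac_weight \<alpha>"
proof -
  define u where "u = 1 - (1 + \<alpha>) / (5 + \<alpha>/2)"
  have u: "u > 0"
    using assms by (simp add: u_def field_simps)
  have "(5 + \<alpha>/2) * ln u \<le> (5 + \<alpha>/2) * (u - 1)"
    using ln_le_minus_one[OF u] assms by (intro mult_left_mono) auto
  also have "\<dots> = - (1 + \<alpha>)"
    using assms by (simp add: u_def field_simps)
  finally have "u powr (5 + \<alpha>/2) * exp (1 + \<alpha>) \<le> 1"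
    using u by (simp add: powr_def mult.commute exp_add[symmetric] exp_le_one_iff)
  moreover have "0 \<le> frac_weight \<alpha>"
    using assms by (auto simp: frac_weight_def intro!: divide_nonneg_pos mult_nonneg_nonneg sin_ge_zero)
  moreover have "theta_const \<alpha> = u powr (5 + \<alpha>/2) * exp (1 + \<alpha>) * frac_weight \<alpha>"
    using assms Gamma_plus1_pos_real[of \<alpha>] unfolding theta_const_def frac_weight_def u_def
    by (simp add: field_simps)
  ultimately show ?thesis
    using mult_right_mono[of _ 1 "frac_weight \<alpha>"] by simp
qed

lemma toeplitz_symbol_frac_coeff_two:
  assumes "1 \<le> n"
  shows "toeplitz_symbol (frac_coeff 2) n x = 2 - 2 * cos x"
proof -
  have "{1..n} = insert 1 {2..n}"
    using assms by auto
  then show ?thesis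
    by (simp add: toeplitz_symbol_def frac_coeff_two)
qed

lemma frac_symbol_bounds:
  assumes "1 < \<alpha>" "\<alpha> \<le> 2" "1 \<le> n" "0 < x" "x < pi"
  shows "2 * theta_const \<alpha> / (real n + 2) powr \<alpha> < toeplitz_symbol (frac_coeff \<alpha>) n x"
    and "toeplitz_symbol (frac_coeff \<alpha>) n x
       < 2 * frac_coeff \<alpha> 0 - 2 * theta_const \<alpha> / (real n + 2) powr \<alpha> - frac_coeff \<alpha> 2"
proof -
  consider "\<alpha> = 2" | "\<alpha> < 2"
    using assms by linarith
  then have "2 * theta_const \<alpha> / (real n + 2) powr \<alpha> < toeplitz_symbol (frac_coeff \<alpha>) n x
    \<and> toeplitz_symbol (frac_coeff \<alpha>) n x
       < 2 * frac_coeff \<alpha> 0 - 2 * theta_const \<alpha> / (real n + 2) powr \<alpha> - frac_coeff \<alpha> 2"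
  proof cases
    case 1
    \<comment> \<open>Here frac_weight vanishes, so strictness has to come from the cosine.\<close>
    have "cos x < 1" "-1 < cos x"
      using assms cos_monotone_0_pi[of 0 x] cos_monotone_0_pi[of x pi] by simp_all
    then show ?thesis
      using 1 assms by (simp add: toeplitz_symbol_frac_coeff_two frac_coeff_two theta_const_def)
  next
    case 2
    have \<alpha>: "0 < \<alpha>" "\<alpha> < 2"
      using 2 assms by simp_all
    have "2 * theta_const \<alpha> / (real n + 2) powr \<alpha> \<le> 2 * frac_weight \<alpha> * (1 / (real n + 2) powr \<alpha>)"
      using theta_const_le_frac_weight[of \<alpha>] assms by (simp add: divide_right_mono)
    also have "\<dots> < 2 * frac_weight \<alpha> * gamma_ratio \<alpha> n"
      using mult_strict_left_mono[OF gamma_ratio_gt[of \<alpha> n], of "2 * frac_weight \<alpha>"]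
        frac_weight_pos[OF \<alpha>] assms 2 by simp
    finally have "2 * theta_const \<alpha> / (real n + 2) powr \<alpha> < 2 * frac_weight \<alpha> * gamma_ratio \<alpha> n" .
    moreover have "frac_coeff \<alpha> (int k) \<le> 0" if "k \<ge> 1" for k
      using frac_coeff_nonpos[OF \<alpha> that] .
    ultimately show ?thesis
      using toeplitz_symbol_bounds[of n "frac_coeff \<alpha>" x] frac_coeff_partial_sum[OF \<alpha>, of n]
        frac_coeff_nonpos[OF \<alpha>, of 2] by auto
  qed
  then show "2 * theta_const \<alpha> / (real n + 2) powr \<alpha> < toeplitz_symbol (frac_coeff \<alpha>) n x"
    and "toeplitz_symbol (frac_coeff \<alpha>) n x
       < 2 * frac_coeff \<alpha> 0 - 2 * theta_const \<alpha> / (real n + 2) powr \<alpha> - frac_coeff \<alpha> 2"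
    by auto
qed

lemma tau_mat_eq:
  "tau_mat a b M dt \<alpha> = mu_par a b M dt \<alpha> \<cdot>\<^sub>m tau_toeplitz (frac_coeff \<alpha>) M"
  by (auto simp: tau_mat_def T1_mat_def HC_mat_def T0_mat_def H_mat_def tau_toeplitz_def
      tau_hankel_def Let_def algebra_simps)

lemma eigenvalue_tau_mat:
  assumes "mu_par a b M dt \<alpha> \<noteq> 0" "eigenvalue (tau_mat a b M dt \<alpha>) lam"
  obtains x where "0 < x" "x < pi" "lam = mu_par a b M dt \<alpha> * toeplitz_symbol (frac_coeff \<alpha>) (M - 1) x"
proof -
  have "eigenvalue (tau_toeplitz (frac_coeff \<alpha>) M) (lam / mu_par a b M dt \<alpha>)"
    using eigenvalue_smult_mat[of "tau_toeplitz (frac_coeff \<alpha>) M" M] assms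
    by (simp add: tau_mat_eq tau_toeplitz_carrier)
  then obtain j where j: "j \<in> {1..M}"
    and lam: "lam / mu_par a b M dt \<alpha> = toeplitz_symbol (frac_coeff \<alpha>) (M - 1) (real j * pi / (real M + 1))"
    using eigenvalue_tau_toeplitz[of "frac_coeff \<alpha>"] frac_coeff_minus by blast
  have "real j * pi < (real M + 1) * pi"
    using j by simp
  then have "0 < real j * pi / (real M + 1)" "real j * pi / (real M + 1) < pi"
    using j by (auto simp: field_simps)
  with lam assms(1) show ?thesis
    by (intro that) (auto simp: field_simps)
qed

theorem lemma4:
  fixes a b dt \<alpha> lam :: real and M :: nat
  assumes "a < b" and "even M" and "M \<ge> 4"
    and "1 < \<alpha>" and "\<alpha> \<le> 2" and "dt > 0"
    and "eigenvalue (tau_mat a b M dt \<alpha>) lam"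
  shows "2 * dt * theta_const \<alpha> / (b - a) powr \<alpha> < lam
    \<and> lam < 2 * dt / grid_h a b M powr \<alpha> *
          (Gamma (\<alpha> + 1) / Gamma (\<alpha>/2 + 1)^2
           - theta_const \<alpha> * grid_h a b M powr \<alpha> / (b - a) powr \<alpha>)
        - frac_coeff \<alpha> 2 * dt / grid_h a b M powr \<alpha>"
proof -
  define h where "h = grid_h a b M"
  define \<mu> where "\<mu> = mu_par a b M dt \<alpha>"
  define P where "P = (real (M - 1) + 2) powr \<alpha>"
  have "h > 0" "\<mu> > 0" and \<mu>: "\<mu> = dt / h powr \<alpha>"
    using assms by (simp_all add: h_def \<mu>_def grid_h_def mu_par_def)
  have "b - a = (real (M - 1) + 2) * h"
    using assms(3) by (simp add: h_def grid_h_def of_nat_diff field_simps)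
  then have ba: "(b - a) powr \<alpha> = P * h powr \<alpha>"
    using \<open>h > 0\<close> by (simp add: P_def powr_mult)
  obtain x where x: "0 < x" "x < pi" and lam: "lam = \<mu> * toeplitz_symbol (frac_coeff \<alpha>) (M - 1) x"
    using eigenvalue_tau_mat[of a b M dt \<alpha> lam] assms(7) \<open>\<mu> > 0\<close> unfolding \<mu>_def by auto
  have "1 \<le> M - 1"
    using assms(3) by simp
  note bounds = frac_symbol_bounds[OF assms(4,5) this x, folded P_def]
  have "\<mu> * (2 * theta_const \<alpha> / P) < lam"
    and "lam < \<mu> * (2 * frac_coeff \<alpha> 0 - 2 * theta_const \<alpha> / P - frac_coeff \<alpha> 2)"
    unfolding lam using bounds[THEN mult_strict_left_mono, OF \<open>\<mu> > 0\<close>] by simp_all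
  moreover have "\<mu> * (2 * theta_const \<alpha> / P) = 2 * dt * theta_const \<alpha> / (b - a) powr \<alpha>"
    and "\<mu> * (2 * frac_coeff \<alpha> 0 - 2 * theta_const \<alpha> / P - frac_coeff \<alpha> 2)
      = 2 * dt / h powr \<alpha> * (Gamma (\<alpha> + 1) / Gamma (\<alpha>/2 + 1)^2 - theta_const \<alpha> * h powr \<alpha> / (b - a) powr \<alpha>)
        - frac_coeff \<alpha> 2 * dt / h powr \<alpha>"
    using \<open>h > 0\<close> by (simp_all add: ba \<mu> P_def frac_coeff_def power2_eq_square field_simps)
  ultimately show ?thesis
    unfolding h_def by simp
qed

end
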